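(* Let $Y,W$ be metric spaces, $\psi\colon Y\to W$ continuous, $\rho\colon Y\to[0,\infty]$ Borel, and $\gamma\colon[0,1]\to Y$ an absolutely continuous path with $\int_\gamma\rho\,ds<\infty$. Suppose $E\subset Y$ is compact with $\mathcal{H}^1_W(\psi(E))=0$ and that $\ell(\psi\circ\gamma|_I)\le\int_{\gamma|_I}\rho\,ds$ for every closed interval $I\subset[0,1]\setminus\gamma^{-1}(E)$. Then $\ell(\psi\circ\gamma)\le\int_\gamma\rho\,ds$.
   Context: $\ell$ denotes the length of a path (supremum over partitions of sums of distances). The metric speed of a path $\gamma$ is $v_\gamma(t)=\lim_{s\to t}d(\gamma(s),\gamma(t))/|s-t|$ where it exists. A rectifiable path $\gamma\colon[a,b]\to Y$ is absolutely continuous if $v_\gamma\in L^1$ and $d(\gamma(t),\gamma(s))\le\int_s^tv_\gamma$ for $s\le t$. For absolutely continuous $\gamma$ and Borel $\rho\ge0$, $\int_\gamma\rho\,ds=\int_a^b(\rho\circ\gamma)v_\gamma\,dt$. $\mathcal{H}^1_W$ is the 1-dimensional Hausdorff measure on $W$. *)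

theory Defs
  imports "HOL-Analysis.Analysis"
begin

definition ediam :: "'a::metric_space set \<Rightarrow> ennreal" where
  "ediam A = (SUP x\<in>A. SUP y\<in>A. ennreal (dist x y))"

definition hausdorff1_pre :: "real \<Rightarrow> 'a::metric_space set \<Rightarrow> ennreal" where
  "hausdorff1_pre \<delta> A =
     (INF C \<in> {C :: nat \<Rightarrow> 'a set. A \<subseteq> (\<Union>i. C i) \<and> (\<forall>i. ediam (C i) \<le> ennreal \<delta>)}.
        (\<Sum>i. ediam (C i)))"

definition hausdorff1 :: "'a::metric_space set \<Rightarrow> ennreal" where
  "hausdorff1 A = (SUP \<delta>\<in>{0<..}. hausdorff1_pre \<delta> A)"

definition path_length :: "(real \<Rightarrow> 'a::metric_space) \<Rightarrow> real \<Rightarrow> real \<Rightarrow> ennreal" where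
  "path_length g a b =
     (SUP ts \<in> {ts. ts \<noteq> [] \<and> hd ts = a \<and> last ts = b \<and> sorted ts}.
        (\<Sum>i<length ts - 1. ennreal (dist (g (ts ! i)) (g (ts ! Suc i)))))"

text \<open>Metric speed of the path g on [a,b] at t (meaningful where the limit exists).\<close>
definition metric_speed :: "(real \<Rightarrow> 'a::metric_space) \<Rightarrow> real \<Rightarrow> real \<Rightarrow> real \<Rightarrow> real" where
  "metric_speed g a b t = Lim (at t within {a..b}) (\<lambda>s. dist (g s) (g t) / \<bar>s - t\<bar>)"

definition abs_continuous_path :: "(real \<Rightarrow> 'a::metric_space) \<Rightarrow> real \<Rightarrow> real \<Rightarrow> bool" where
  "abs_continuous_path g a b \<longleftrightarrow>
     path_length g a b < \<infinity> \<and>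
     set_integrable lebesgue {a..b} (metric_speed g a b) \<and>
     (\<forall>s t. a \<le> s \<longrightarrow> s \<le> t \<longrightarrow> t \<le> b \<longrightarrow>
        dist (g t) (g s) \<le> (LINT x:{s..t}|lebesgue. metric_speed g a b x))"

definition line_integral :: "('a::metric_space \<Rightarrow> ennreal) \<Rightarrow> (real \<Rightarrow> 'a) \<Rightarrow> real \<Rightarrow> real \<Rightarrow> ennreal" where
  "line_integral \<rho> g a b =
     (\<integral>\<^sup>+ t \<in> {a..b}. \<rho> (g t) * ennreal (metric_speed g a b t) \<partial>lebesgue)"

end

(* Write sigma = psi o gamma and let mu be the measure rho(gamma t) v(t) dt on [0,1], so that mu [c,d]
   is the line integral over [c,d]. Since mu is atomless and additive it dominates every partition sum,
   so it suffices to show d(sigma s, sigma t) <= mu [s,t]. Let f u = d(sigma s, sigma u) and let U be the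
   open set of u in (s,t) with gamma u not in E. By the intermediate value theorem f [s,t] contains
   [0, f t]. The values of f off U lie in the image of psi E under a 1-Lipschitz map, a Lebesgue null
   set; on each component interval X of U the hypothesis confines f X to an interval of length at most
   mu X. Summing over the countably many components gives f t <= mu U <= mu [s,t]. *)

theory Submission
  imports Defs
begin

lemma dist_le_ediam:
  assumes "x \<in> A" "y \<in> A"
  shows "ennreal (dist x y) \<le> ediam A"
  unfolding ediam_def by (rule SUP_upper2[OF assms(1)], rule SUP_upper[OF assms(2)])

lemma obtain_lebesgue_cover_le_diameter:
  fixes S :: "real set" and r :: ennreal
  assumes "\<And>x y. x \<in> S \<Longrightarrow> y \<in> S \<Longrightarrow> ennreal (dist x y) \<le> r"
  obtains B where "B \<in> sets lebesgue" "S \<subseteq> B" "emeasure lebesgue B \<le> r"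
proof (cases "S = {} \<or> r = \<infinity>")
  case True
  then show ?thesis
  proof
    assume "S = {}" then show ?thesis by (intro that[of "{}"]) auto
  next
    assume "r = \<infinity>" then show ?thesis by (intro that[of UNIV]) auto
  qed
next
  case False
  then obtain x0 d where "x0 \<in> S" and r: "r = ennreal d" "0 \<le> d"
    by (metis all_not_in_conv ennreal_cases infinity_ennreal_def)
  then have dist_le: "x - y \<le> d" if "x \<in> S" "y \<in> S" for x y
    using assms[OF that] by (simp add: dist_real_def)
  have bdd: "bdd_above S" "bdd_below S"
    using dist_le[OF _ \<open>x0 \<in> S\<close>] dist_le[OF \<open>x0 \<in> S\<close>]
    by (auto intro!: bdd_aboveI[of _ "x0 + d"] bdd_belowI[of _ "x0 - d"] simp: algebra_simps)
  have "x - d \<le> Inf S" if "x \<in> S" for x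
    using \<open>x0 \<in> S\<close> dist_le[OF that] by (intro cInf_greatest) (auto simp: algebra_simps)
  then have "Sup S \<le> Inf S + d"
    using \<open>x0 \<in> S\<close> by (intro cSup_least) (auto simp: algebra_simps)
  moreover have "S \<subseteq> {Inf S..Sup S}"
    using bdd by (auto intro: cInf_lower cSup_upper)
  moreover have "Inf S \<le> Sup S"
    using bdd \<open>x0 \<in> S\<close> by (intro cInf_le_cSup) auto
  ultimately show ?thesis
    using r by (intro that[of "{Inf S..Sup S}"]) auto
qed

lemma lebesgue_cover_image_le:
  fixes f :: "'a \<Rightarrow> real" and r :: ennreal
  assumes "\<And>x y. x \<in> X \<Longrightarrow> y \<in> X \<Longrightarrow> ennreal (dist (f x) (f y)) \<le> r"
  shows "\<exists>B. B \<in> sets lebesgue \<and> f ` X \<subseteq> B \<and> emeasure lebesgue B \<le> r"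
proof -
  have "ennreal (dist u v) \<le> r" if uv: "u \<in> f ` X" "v \<in> f ` X" for u v
  proof -
    obtain x y where "x \<in> X" "y \<in> X" "u = f x" "v = f y"
      using uv by blast
    then show ?thesis
      using assms by simp
  qed
  then obtain B where "B \<in> sets lebesgue" "f ` X \<subseteq> B" "emeasure lebesgue B \<le> r"
    by (rule obtain_lebesgue_cover_le_diameter)
  then show ?thesis
    by blast
qed

lemma lipschitz_image_null_sets_lebesgue:
  fixes \<phi> :: "'a::metric_space \<Rightarrow> real"
  assumes lip: "1-lipschitz_on A \<phi>" and null: "hausdorff1 A = 0"
  shows "\<phi> ` A \<in> null_sets lebesgue"
proof (clarsimp simp add: completion.null_sets_outer_le)
  fix e :: real assume "0 < e"
  have "hausdorff1_pre 1 A \<le> hausdorff1 A"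
    unfolding hausdorff1_def by (rule SUP_upper) simp
  then have "hausdorff1_pre 1 A < ennreal e"
    using null \<open>0 < e\<close> by simp
  then obtain C where cover: "A \<subseteq> (\<Union>i. C i)" and sum_C: "(\<Sum>i. ediam (C i)) < ennreal e"
    unfolding hausdorff1_pre_def INF_less_iff by auto
  have "\<exists>B. B \<in> sets lebesgue \<and> \<phi> ` (A \<inter> C i) \<subseteq> B \<and> emeasure lebesgue B \<le> ediam (C i)" for i
  proof -
    have "ennreal (dist (\<phi> x) (\<phi> y)) \<le> ediam (C i)" if xy: "x \<in> A \<inter> C i" "y \<in> A \<inter> C i" for x y
    proof -
      have "dist (\<phi> x) (\<phi> y) \<le> dist x y"
        using lipschitz_onD[OF lip, of x y] xy by simp
      then show ?thesis
        using dist_le_ediam[of x "C i" y] xy by (blast intro: order_trans ennreal_leI)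
    qed
    then show ?thesis
      by (rule lebesgue_cover_image_le)
  qed
  then obtain B where B: "\<And>i. B i \<in> sets lebesgue" "\<And>i. \<phi> ` (A \<inter> C i) \<subseteq> B i"
      "\<And>i. emeasure lebesgue (B i) \<le> ediam (C i)"
    by metis
  have "emeasure lebesgue (\<Union>i. B i) \<le> (\<Sum>i. emeasure lebesgue (B i))"
    using B(1) by (intro emeasure_subadditive_countably) auto
  also have "\<dots> \<le> (\<Sum>i. ediam (C i))"
    using B(3) by (intro suminf_le) auto
  also have "\<dots> < ennreal e"
    by (rule sum_C)
  finally have T: "emeasure lebesgue (\<Union>i. B i) < ennreal e" .
  have "(\<Union>i. B i) \<in> lmeasurable"
    using B(1) T by (intro fmeasurableI) (auto simp: less_top[symmetric] dest: less_trans)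
  moreover have "measure lebesgue (\<Union>i. B i) \<le> e"
    using T \<open>0 < e\<close> unfolding measure_def by (simp add: enn2real_leI)
  moreover have "\<phi> ` A \<subseteq> (\<Union>i. B i)"
    using cover B(2) by blast
  ultimately show "\<exists>T\<in>lmeasurable. \<phi> ` A \<subseteq> T \<and> measure lebesgue T \<le> e"
    by blast
qed

lemma lipschitz_on_dist_left: "1-lipschitz_on A (dist a)"
proof (rule lipschitz_onI)
  show "dist (dist a x) (dist a y) \<le> 1 * dist x y" for x y
    using abs_dist_diff_le[of x a y] by (simp add: dist_real_def dist_commute)
qed simp

lemma obtain_disjoint_family_enumeration:
  assumes "countable C" "pairwise disjnt C"
  obtains X :: "nat \<Rightarrow> 'a set"
  where "disjoint_family X" "(\<Union>i. X i) = \<Union>C" "\<And>i. X i \<in> insert {} C"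
proof
  define X where "X n = (if n \<in> to_nat_on C ` C then from_nat_into C n else {})" for n
  show "X i \<in> insert {} C" for i
    unfolding X_def using assms(1) by auto
  show "disjoint_family X"
    unfolding disjoint_family_on_def
  proof (intro ballI impI)
    fix m n :: nat assume "m \<noteq> n"
    show "X m \<inter> X n = {}"
    proof (cases "m \<in> to_nat_on C ` C \<and> n \<in> to_nat_on C ` C")
      case True
      then obtain A B where "A \<in> C" "B \<in> C" "m = to_nat_on C A" "n = to_nat_on C B"
        by auto
      then show ?thesis
        using \<open>m \<noteq> n\<close> assms unfolding X_def by (auto simp: pairwise_def disjnt_def)
    qed (auto simp: X_def)
  qed
  show "(\<Union>i. X i) = \<Union>C"
  proof
    show "(\<Union>i. X i) \<subseteq> \<Union>C"
      using \<open>\<And>i. X i \<in> insert {} C\<close> by blast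
    show "\<Union>C \<subseteq> (\<Union>i. X i)"
    proof
      fix x assume "x \<in> \<Union>C"
      then obtain A where "A \<in> C" "x \<in> A" by blast
      then have "X (to_nat_on C A) = A"
        unfolding X_def using assms(1) by auto
      then show "x \<in> (\<Union>i. X i)"
        using \<open>x \<in> A\<close> by blast
    qed
  qed
qed

lemma open_real_eq_disjoint_Union_intervals:
  fixes U :: "real set"
  assumes "open U"
  obtains X :: "nat \<Rightarrow> real set"
  where "disjoint_family X" "(\<Union>i. X i) = U" "\<And>i. open (X i)" "\<And>i. is_interval (X i)"
proof -
  have disjoint: "pairwise disjnt (components U)"
    using pairwise_disjoint_components[of U] unfolding pairwise_def disjnt_def .
  then have countable: "countable (components U)"
    using assms by (intro countable_disjoint_open_subsets) (auto simp: open_components)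
  obtain X :: "nat \<Rightarrow> real set"
    where X: "disjoint_family X" "(\<Union>i. X i) = U" "\<And>i. X i \<in> insert {} (components U)"
    by (fact obtain_disjoint_family_enumeration[OF countable disjoint, unfolded Union_components])
  have "open (X i)" for i
    using X(3)[of i] open_components[OF assms] by auto
  moreover have "is_interval (X i)" for i
    using X(3)[of i] in_components_connected by (auto simp: is_interval_connected_1)
  ultimately show ?thesis
    by (rule that[OF X(1,2)])
qed

lemma closed_segment_subset_image:
  fixes f :: "real \<Rightarrow> real"
  assumes "continuous_on {s..t} f" "s \<le> t"
  shows "closed_segment (f s) (f t) \<subseteq> f ` {s..t}"
proof
  fix y assume "y \<in> closed_segment (f s) (f t)"
  moreover have "continuous_on (closed_segment s t) f"
    using assms by (simp add: closed_segment_eq_real_ivl1)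
  ultimately obtain x where "x \<in> closed_segment s t" "f x = y"
    using IVT'_closed_segment_real by blast
  then show "y \<in> f ` {s..t}"
    using closed_segment_eq_real_ivl1[OF \<open>s \<le> t\<close>] by blast
qed

lemma dist_le_emeasure_off_null_image:
  fixes f :: "real \<Rightarrow> real" and M :: "real measure"
  assumes f: "continuous_on {s..t} f" and "s \<le> t"
    and M: "sets borel \<subseteq> sets M"
    and U: "open U" "U \<subseteq> {s..t}"
    and null: "f ` ({s..t} - U) \<in> null_sets lebesgue"
    and osc: "\<And>x y. x \<le> y \<Longrightarrow> {x..y} \<subseteq> U \<Longrightarrow> ennreal (dist (f x) (f y)) \<le> emeasure M {x..y}"
  shows "ennreal (dist (f s) (f t)) \<le> emeasure M {s..t}"
proof -
  obtain X :: "nat \<Rightarrow> real set"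
    where X: "disjoint_family X" "(\<Union>i. X i) = U" "\<And>i. open (X i)" "\<And>i. is_interval (X i)"
    by (fact open_real_eq_disjoint_Union_intervals[OF U(1)])
  have X_sets: "X i \<in> sets M" for i
    by (rule subsetD[OF M borel_open[OF X(3)]])
  have osc_X: "ennreal (dist (f x) (f y)) \<le> emeasure M (X i)" if "x \<in> X i" "y \<in> X i" for x y i
  proof -
    have "min x y \<in> X i" "max x y \<in> X i"
      using that by (simp_all add: min_def max_def)
    then have "{min x y..max x y} \<subseteq> X i"
      using X(4)[of i] unfolding is_interval_1 by (meson atLeastAtMost_iff subsetI)
    moreover have "X i \<subseteq> U"
      using X(2) by blast
    ultimately have "ennreal (dist (f (min x y)) (f (max x y))) \<le> emeasure M {min x y..max x y}"
      using osc[of "min x y" "max x y"] by simp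
    also have "\<dots> \<le> emeasure M (X i)"
      using \<open>{min x y..max x y} \<subseteq> X i\<close> by (rule emeasure_mono[OF _ X_sets])
    finally show ?thesis
      by (cases "x \<le> y") (simp_all add: min_def max_def dist_commute)
  qed
  have "\<exists>B. B \<in> sets lebesgue \<and> f ` X i \<subseteq> B \<and> emeasure lebesgue B \<le> emeasure M (X i)" for i
    by (rule lebesgue_cover_image_le[where X="X i" and f=f, OF osc_X])
  then obtain B where B: "\<And>i. B i \<in> sets lebesgue" "\<And>i. f ` X i \<subseteq> B i"
      "\<And>i. emeasure lebesgue (B i) \<le> emeasure M (X i)"
    by metis
  have B_sets: "(\<Union>i. B i) \<in> sets lebesgue"
    using B(1) by (intro sets.countable_UN) auto
  have "closed_segment (f s) (f t) \<subseteq> f ` {s..t}"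
    by (rule closed_segment_subset_image[OF f \<open>s \<le> t\<close>])
  also have "\<dots> \<subseteq> f ` ({s..t} - U) \<union> (\<Union>i. B i)"
    using X(2) B(2) by blast
  finally have "emeasure lebesgue (closed_segment (f s) (f t)) \<le> emeasure lebesgue (f ` ({s..t} - U) \<union> (\<Union>i. B i))"
    using null B_sets by (intro emeasure_mono) auto
  also have "\<dots> = emeasure lebesgue (\<Union>i. B i)"
    using emeasure_Un_null_set[OF B_sets null] by (simp add: Un_commute)
  also have "\<dots> \<le> (\<Sum>i. emeasure lebesgue (B i))"
    using B(1) by (intro emeasure_subadditive_countably) auto
  also have "\<dots> \<le> (\<Sum>i. emeasure M (X i))"
    using B(3) by (intro suminf_le) auto
  also have "\<dots> = emeasure M U"
    using suminf_emeasure[of X M] X(1,2) X_sets by auto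
  also have "\<dots> \<le> emeasure M {s..t}"
    using U(2) M by (intro emeasure_mono) auto
  finally show ?thesis
    by (simp add: closed_segment_eq_real_ivl dist_real_def split: if_splits)
qed

lemma dist_le_emeasure_off_hausdorff_null:
  fixes \<sigma> :: "real \<Rightarrow> 'a::metric_space" and M :: "real measure"
  assumes \<sigma>: "continuous_on {s..t} \<sigma>" and "s \<le> t"
    and M: "sets borel \<subseteq> sets M"
    and U: "open U" "U \<subseteq> {s..t}"
    and Z: "\<sigma> ` ({s<..<t} - U) \<subseteq> Z" "hausdorff1 Z = 0"
    and osc: "\<And>x y. x \<le> y \<Longrightarrow> {x..y} \<subseteq> U \<Longrightarrow> ennreal (dist (\<sigma> x) (\<sigma> y)) \<le> emeasure M {x..y}"
  shows "ennreal (dist (\<sigma> s) (\<sigma> t)) \<le> emeasure M {s..t}"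
proof -
  define f where "f u = dist (\<sigma> s) (\<sigma> u)" for u
  have "f ` ({s..t} - U) \<subseteq> dist (\<sigma> s) ` Z \<union> {f s, f t}"
    using Z(1) unfolding f_def by force
  moreover have "dist (\<sigma> s) ` Z \<union> {f s, f t} \<in> null_sets lebesgue"
    using lipschitz_image_null_sets_lebesgue[OF lipschitz_on_dist_left Z(2)]
    by (auto intro: null_sets_completionI finite_imp_null_set_lborel)
  ultimately have null: "f ` ({s..t} - U) \<in> null_sets lebesgue"
    by (rule null_sets_completion_subset)
  have "ennreal (dist (f x) (f y)) \<le> emeasure M {x..y}" if "x \<le> y" "{x..y} \<subseteq> U" for x y
  proof -
    have "dist (f x) (f y) \<le> dist (\<sigma> x) (\<sigma> y)"
      using lipschitz_onD[OF lipschitz_on_dist_left, of "\<sigma> x" _ "\<sigma> y"] unfolding f_def by auto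
    then show ?thesis
      using osc[OF that] by (meson ennreal_leI order_trans)
  qed
  moreover have "continuous_on {s..t} f"
    unfolding f_def by (intro continuous_intros \<sigma>)
  ultimately have "ennreal (dist (f s) (f t)) \<le> emeasure M {s..t}"
    using dist_le_emeasure_off_null_image[OF _ \<open>s \<le> t\<close> M U null] by blast
  then show ?thesis
    by (simp add: f_def dist_real_def)
qed

lemma sum_partition_le_emeasure:
  fixes M :: "real measure"
  assumes M: "sets borel \<subseteq> sets M" and atomless: "\<And>x. emeasure M {x} = 0"
    and G: "\<And>x y. a \<le> x \<Longrightarrow> x \<le> y \<Longrightarrow> y \<le> b \<Longrightarrow> G x y \<le> emeasure M {x..y}"
  shows "ts \<noteq> [] \<Longrightarrow> sorted ts \<Longrightarrow> a \<le> hd ts \<Longrightarrow> last ts \<le> b \<Longrightarrow>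
    (\<Sum>i<length ts - 1. G (ts!i) (ts!Suc i)) \<le> emeasure M {hd ts..last ts}"
proof (induction ts rule: induct_list012)
  case (3 x y zs)
  let ?L = "last (y#zs)"
  have "x \<le> y" "y \<le> ?L" "a \<le> x" "?L \<le> b"
    using "3.prems" by (auto simp: last_in_set)
  have borel_M: "A \<in> sets M" if "A \<in> sets borel" for A
    using M that by blast
  have "{y} \<in> null_sets M"
    using atomless borel_M by (simp add: null_sets_def)
  then have "emeasure M ({y..?L} - {y}) = emeasure M {y..?L}"
    using borel_M by (intro emeasure_Diff_null_set) simp_all
  moreover have "{y..?L} - {y} = {y<..?L}"
    by auto
  ultimately have "emeasure M {y..?L} = emeasure M {y<..?L}"
    by simp
  moreover have "(\<Sum>i<length (y#zs) - 1. G ((y#zs)!i) ((y#zs)!Suc i)) \<le> emeasure M {y..?L}"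
    using "3.IH"(2) "3.prems" \<open>a \<le> x\<close> \<open>x \<le> y\<close> by auto
  ultimately have "G x y + (\<Sum>i<length (y#zs) - 1. G ((y#zs)!i) ((y#zs)!Suc i))
      \<le> emeasure M {x..y} + emeasure M {y<..?L}"
    using G \<open>a \<le> x\<close> \<open>x \<le> y\<close> \<open>y \<le> ?L\<close> \<open>?L \<le> b\<close> by (intro add_mono) auto
  also have "\<dots> = emeasure M ({x..y} \<union> {y<..?L})"
    using borel_M by (intro plus_emeasure) auto
  also have "{x..y} \<union> {y<..?L} = {x..?L}"
    using \<open>x \<le> y\<close> \<open>y \<le> ?L\<close> by auto
  finally show ?case
    by (simp add: sum.lessThan_Suc_shift del: sum.lessThan_Suc)
qed simp_all

lemma path_length_le_emeasure:
  fixes g :: "real \<Rightarrow> 'a::metric_space" and M :: "real measure"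
  assumes "sets borel \<subseteq> sets M" "\<And>x. emeasure M {x} = 0"
    and "\<And>x y. a \<le> x \<Longrightarrow> x \<le> y \<Longrightarrow> y \<le> b \<Longrightarrow> ennreal (dist (g x) (g y)) \<le> emeasure M {x..y}"
  shows "path_length g a b \<le> emeasure M {a..b}"
  unfolding path_length_def
proof (rule SUP_least, clarify)
  fix ts :: "real list" assume "ts \<noteq> []" "sorted ts" and ends: "a = hd ts" "b = last ts"
  then show "(\<Sum>i<length ts - 1. ennreal (dist (g (ts!i)) (g (ts!Suc i)))) \<le> emeasure M {hd ts..last ts}"
    using sum_partition_le_emeasure[OF assms] by simp
qed

lemma dist_le_path_length:
  assumes "x \<le> y"
  shows "ennreal (dist (g x) (g y)) \<le> path_length g x y"
  unfolding path_length_def by (rule SUP_upper2[where i="[x, y]"]) (use assms in auto)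

lemma metric_speed_subinterval:
  assumes "a \<le> c" "d \<le> b" "u \<in> {c<..<d}"
  shows "metric_speed g c d u = metric_speed g a b u"
proof -
  have "at u within {c..d} = at u" "at u within {a..b} = at u"
    using assms by (auto intro!: at_within_interior)
  then show ?thesis
    unfolding metric_speed_def by simp
qed

lemma abs_continuous_path_continuous_on:
  assumes "abs_continuous_path g a b"
  shows "continuous_on {a..b} g"
proof -
  let ?v = "metric_speed g a b"
  have v: "set_integrable lebesgue {a..b} ?v"
    and dist_le: "\<And>s t. a \<le> s \<Longrightarrow> s \<le> t \<Longrightarrow> t \<le> b \<Longrightarrow> dist (g t) (g s) \<le> (LINT x:{s..t}|lebesgue. ?v x)"
    using assms unfolding abs_continuous_path_def by auto
  have int: "?v integrable_on {a..b}"
    using set_lebesgue_integral_eq_integral(1)[OF v] .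
  define I where "I x = integral {a..x} ?v" for x
  have ordered: "dist (g t) (g s) \<le> dist (I t) (I s)" if "a \<le> s" "s \<le> t" "t \<le> b" for s t
  proof -
    have "set_integrable lebesgue {s..t} ?v"
      by (rule set_integrable_subset[OF v]) (use that in auto)
    then have "(LINT x:{s..t}|lebesgue. ?v x) = integral {s..t} ?v"
      by (rule set_lebesgue_integral_eq_integral(2))
    also have "\<dots> = I t - I s"
      using Henstock_Kurzweil_Integration.integral_combine[of a s t ?v]
        integrable_on_subinterval[OF int, of a t] that
      unfolding I_def by auto
    finally show ?thesis
      using dist_le[OF that] by (simp add: dist_real_def)
  qed
  have dominated: "dist (g t) (g s) \<le> dist (I t) (I s)" if "s \<in> {a..b}" "t \<in> {a..b}" for s t
    using ordered[of s t] ordered[of t s] that by (cases "s \<le> t") (simp_all add: dist_commute)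
  have "continuous_on {a..b} I"
    unfolding I_def by (rule indefinite_integral_continuous_1[OF int])
  then show ?thesis
    unfolding continuous_on_iff by (meson dominated le_less_trans)
qed

definition line_integral_measure :: "('a::metric_space \<Rightarrow> ennreal) \<Rightarrow> (real \<Rightarrow> 'a) \<Rightarrow> real \<Rightarrow> real \<Rightarrow> real measure"
  where "line_integral_measure \<rho> g a b =
    density lebesgue (\<lambda>t. if t \<in> {a..b} then \<rho> (g t) * ennreal (metric_speed g a b t) else 0)"

lemma sets_line_integral_measure [simp]: "sets (line_integral_measure \<rho> g a b) = sets lebesgue"
  by (simp add: line_integral_measure_def)

lemma borel_measurable_line_integral_density:
  assumes "abs_continuous_path g a b" and \<rho>: "\<rho> \<in> borel_measurable borel"
  shows "(\<lambda>t. if t \<in> {a..b} then \<rho> (g t) * ennreal (metric_speed g a b t) else 0) \<in> borel_measurable lebesgue"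
proof -
  have "\<rho> \<circ> g \<in> borel_measurable (restrict_space borel {a..b})"
    using measurable_comp[OF borel_measurable_continuous_on_restrict \<rho>]
      abs_continuous_path_continuous_on[OF assms(1)] by blast
  then have "(\<lambda>t. if t \<in> {a..b} then (\<rho> \<circ> g) t else 0) \<in> borel_measurable borel"
    by (subst (asm) measurable_restrict_space_iff[where c=0]) auto
  then have \<rho>g: "(\<lambda>t. if t \<in> {a..b} then \<rho> (g t) else 0) \<in> borel_measurable lebesgue"
    unfolding o_def by (intro measurable_completion) simp
  have v: "(\<lambda>t. indicator {a..b} t *\<^sub>R metric_speed g a b t) \<in> borel_measurable lebesgue"
    using assms(1) unfolding abs_continuous_path_def set_integrable_def
    by (blast intro: borel_measurable_integrable)
  have "(\<lambda>t. if t \<in> {a..b} then \<rho> (g t) * ennreal (metric_speed g a b t) else 0) =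
      (\<lambda>t. (if t \<in> {a..b} then \<rho> (g t) else 0) * ennreal (indicator {a..b} t *\<^sub>R metric_speed g a b t))"
    by (auto simp: fun_eq_iff)
  with \<rho>g v show ?thesis
    by simp
qed

lemma emeasure_line_integral_measure_singleton:
  assumes "abs_continuous_path g a b" "\<rho> \<in> borel_measurable borel"
  shows "emeasure (line_integral_measure \<rho> g a b) {x} = 0"
proof -
  have "AE t in lebesgue. t \<notin> {x}"
    by (rule AE_not_in) simp
  then have "AE t in lebesgue. t \<in> {x} \<longrightarrow>
      (if t \<in> {a..b} then \<rho> (g t) * ennreal (metric_speed g a b t) else 0) = 0"
    by eventually_elim simp
  then have "{x} \<in> null_sets (line_integral_measure \<rho> g a b)"
    unfolding line_integral_measure_def
    by (subst null_sets_density_iff[OF borel_measurable_line_integral_density[OF assms]]) simp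
  then show ?thesis
    by blast
qed

lemma emeasure_line_integral_measure_Icc:
  assumes "abs_continuous_path g a b" "\<rho> \<in> borel_measurable borel" "a \<le> c" "d \<le> b"
  shows "emeasure (line_integral_measure \<rho> g a b) {c..d} = line_integral \<rho> g c d"
proof -
  let ?h = "\<lambda>t. if t \<in> {a..b} then \<rho> (g t) * ennreal (metric_speed g a b t) else 0"
  have "AE t in lebesgue. t \<notin> {c, d}"
    by (rule AE_not_in) simp
  then have "AE t in lebesgue. ?h t * indicator {c..d} t = \<rho> (g t) * ennreal (metric_speed g c d t) * indicator {c..d} t"
  proof (rule AE_mp, intro AE_I2 impI)
    fix t assume "t \<notin> {c, d}"
    then consider "t \<in> {c<..<d}" | "t \<notin> {c..d}"
      by fastforce
    then show "?h t * indicator {c..d} t = \<rho> (g t) * ennreal (metric_speed g c d t) * indicator {c..d} t"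
    proof cases
      case 1
      then show ?thesis
        using metric_speed_subinterval[OF assms(3,4) 1, of g] assms(3,4) by auto
    qed simp
  qed
  then have "(\<integral>\<^sup>+ t. ?h t * indicator {c..d} t \<partial>lebesgue) = line_integral \<rho> g c d"
    unfolding line_integral_def by (rule nn_integral_cong_AE)
  then show ?thesis
    unfolding line_integral_measure_def
    by (subst emeasure_density[OF borel_measurable_line_integral_density[OF assms(1,2)]]) auto
qed

lemma dist_le_line_integral_measure:
  fixes \<psi> :: "'y::metric_space \<Rightarrow> 'w::metric_space"
  assumes \<psi>: "continuous_on UNIV \<psi>" and \<rho>: "\<rho> \<in> borel_measurable borel"
    and \<gamma>: "abs_continuous_path \<gamma> a b"
    and E: "closed E" "hausdorff1 (\<psi> ` E) = 0"
    and off_E: "\<And>c d. c \<le> d \<Longrightarrow> {c..d} \<subseteq> {a..b} - {t. \<gamma> t \<in> E} \<Longrightarrow>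
      path_length (\<psi> \<circ> \<gamma>) c d \<le> line_integral \<rho> \<gamma> c d"
    and st: "a \<le> s" "s \<le> t" "t \<le> b"
  shows "ennreal (dist ((\<psi> \<circ> \<gamma>) s) ((\<psi> \<circ> \<gamma>) t)) \<le> emeasure (line_integral_measure \<rho> \<gamma> a b) {s..t}"
proof (rule dist_le_emeasure_off_hausdorff_null[OF _ \<open>s \<le> t\<close> _ _ _ _ E(2)])
  let ?U = "{s<..<t} \<inter> \<gamma> -` (- E)"
  have "continuous_on {s..t} \<gamma>"
    using st by (intro continuous_on_subset[OF abs_continuous_path_continuous_on[OF \<gamma>]]) auto
  then show "continuous_on {s..t} (\<psi> \<circ> \<gamma>)"
    using continuous_on_subset[OF \<psi>] by (intro continuous_on_compose) auto
  have "continuous_on {s<..<t} \<gamma>"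
    using \<open>continuous_on {s..t} \<gamma>\<close> by (rule continuous_on_subset) auto
  then show "open ?U"
    using E(1) by (intro continuous_open_preimage) auto
  show "sets borel \<subseteq> sets (line_integral_measure \<rho> \<gamma> a b)"
    by auto
  show "?U \<subseteq> {s..t}" "(\<psi> \<circ> \<gamma>) ` ({s<..<t} - ?U) \<subseteq> \<psi> ` E"
    by auto
  fix x y assume "x \<le> y" "{x..y} \<subseteq> ?U"
  then have xy: "{x..y} \<subseteq> {a..b} - {t. \<gamma> t \<in> E}"
    using st by auto
  have "ennreal (dist ((\<psi> \<circ> \<gamma>) x) ((\<psi> \<circ> \<gamma>) y)) \<le> path_length (\<psi> \<circ> \<gamma>) x y"
    by (rule dist_le_path_length[OF \<open>x \<le> y\<close>])
  also have "\<dots> \<le> line_integral \<rho> \<gamma> x y"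
    by (rule off_E[OF \<open>x \<le> y\<close> xy])
  also have "\<dots> = emeasure (line_integral_measure \<rho> \<gamma> a b) {x..y}"
    using xy \<open>x \<le> y\<close> by (intro emeasure_line_integral_measure_Icc[OF \<gamma> \<rho>, symmetric]) auto
  finally show "ennreal (dist ((\<psi> \<circ> \<gamma>) x) ((\<psi> \<circ> \<gamma>) y))
      \<le> emeasure (line_integral_measure \<rho> \<gamma> a b) {x..y}" .
qed

theorem lemma2p2:
  fixes \<psi> :: "'y::metric_space \<Rightarrow> 'w::metric_space"
    and \<rho> :: "'y \<Rightarrow> ennreal"
    and \<gamma> :: "real \<Rightarrow> 'y"
    and E :: "'y set"
  assumes "continuous_on UNIV \<psi>"
    and "\<rho> \<in> borel_measurable borel"
    and "abs_continuous_path \<gamma> 0 1"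
    and "line_integral \<rho> \<gamma> 0 1 < \<infinity>"
    and "compact E"
    and "hausdorff1 (\<psi> ` E) = 0"
    and "\<And>c d. c \<le> d \<Longrightarrow> {c..d} \<subseteq> {0..1} - {t. \<gamma> t \<in> E} \<Longrightarrow>
           path_length (\<psi> \<circ> \<gamma>) c d \<le> line_integral \<rho> \<gamma> c d"
  shows "path_length (\<psi> \<circ> \<gamma>) 0 1 \<le> line_integral \<rho> \<gamma> 0 1"
proof -
  let ?\<mu> = "line_integral_measure \<rho> \<gamma> 0 1"
  have "path_length (\<psi> \<circ> \<gamma>) 0 1 \<le> emeasure ?\<mu> {0..1}"
  proof (rule path_length_le_emeasure)
    show "sets borel \<subseteq> sets ?\<mu>" "emeasure ?\<mu> {x} = 0" for x
      using emeasure_line_integral_measure_singleton[OF assms(3,2)] by auto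
    show "ennreal (dist ((\<psi> \<circ> \<gamma>) s) ((\<psi> \<circ> \<gamma>) t)) \<le> emeasure ?\<mu> {s..t}"
      if "0 \<le> s" "s \<le> t" "t \<le> 1" for s t
      using dist_le_line_integral_measure[OF assms(1-3) compact_imp_closed[OF assms(5)] assms(6,7) that] .
  qed
  then show ?thesis
    using emeasure_line_integral_measure_Icc[OF assms(3,2), of 0 1] by simp
qed

end
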